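(* Let $f(x)=x^5+px^4+qx^3+rx^2+sx+t$ with real coefficients, and suppose $D=0$ and $L_1<0$ (so that $f$ has one real double root, one real simple root and two non-real complex conjugate roots). Then the double root of $f$ is $d=C_0/L_1$, and with $F_2=r+3qd+6pd^2+10d^3$: if $F_2>0$ then the real simple root is smaller than the double root, and if $F_2<0$ then the real simple root is larger than the double root.
   Context: Let $\alpha_1,\dots,\alpha_5\in\mathbb{C}$ be the roots of $f$ listed with multiplicity. $D=\prod_{1\le i<j\le 5}(\alpha_i-\alpha_j)^2$ is the discriminant of $f$. $L_1=-264ps^2r-12p^3tq^2+36r^3pq-124srpq^2+28srp^3q+260sptq-132p^2qrt+240pr^2t+234sqr^2+32p^4tr+48ptq^3-56sp^3t-80q^2rt+194qs^2p^2-600str-6q^3sp^2+2p^2q^2r^2-12sr^2p^2-54r^4+320s^3-8q^3r^2-8r^3p^3+250qt^2-176q^2s^2+24q^4s-36p^4s^2-100p^2t^2$. $C_0=48sp^4t+4sp^3r^2+80p^3t^2-32p^3rqt-3p^3s^2q+7s^2p^2r-p^2srq^2-4p^2r^2t+9p^2tq^3-266sqp^2t+16ps^3+146ptrq^2-18spr^2q+290sptr-275pqt^2+12ps^2q^2+4sq^3r-195r^2qt+260sq^2t+27sr^3+375t^2r-36q^4t-48rs^2q-400ts^2$. *)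

theory Defs
  imports "HOL-Computational_Algebra.Polynomial"
begin

definition quintic :: "real \<Rightarrow> real \<Rightarrow> real \<Rightarrow> real \<Rightarrow> real \<Rightarrow> real poly" where
  "quintic p q r s t = [:t, s, r, q, p, 1:]"

text \<open>Discriminant as product of squared root differences, with the complex roots
  alpha_0..alpha_4 of f listed with multiplicity (any such listing).\<close>
definition disc5 :: "real poly \<Rightarrow> complex" where
  "disc5 f = (let \<alpha> = (SOME \<alpha> :: nat \<Rightarrow> complex.
       map_poly complex_of_real f = (\<Prod>i<5. [:- \<alpha> i, 1:]))
     in \<Prod>i<5. \<Prod>j\<in>{i<..<5}. (\<alpha> i - \<alpha> j)^2)"

definition L1 :: "real \<Rightarrow> real \<Rightarrow> real \<Rightarrow> real \<Rightarrow> real \<Rightarrow> real" where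
  "L1 p q r s t = -264*p*s^2*r-12*p^3*t*q^2+36*r^3*p*q-124*s*r*p*q^2+28*s*r*p^3*q+260*s*p*t*q
    -132*p^2*q*r*t+240*p*r^2*t+234*s*q*r^2+32*p^4*t*r+48*p*t*q^3-56*s*p^3*t-80*q^2*r*t
    +194*q*s^2*p^2-600*s*t*r-6*q^3*s*p^2+2*p^2*q^2*r^2-12*s*r^2*p^2-54*r^4+320*s^3
    -8*q^3*r^2-8*r^3*p^3+250*q*t^2-176*q^2*s^2+24*q^4*s-36*p^4*s^2-100*p^2*t^2"

definition C0 :: "real \<Rightarrow> real \<Rightarrow> real \<Rightarrow> real \<Rightarrow> real \<Rightarrow> real" where
  "C0 p q r s t = 48*s*p^4*t+4*s*p^3*r^2+80*p^3*t^2-32*p^3*r*q*t-3*p^3*s^2*q+7*s^2*p^2*r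
    -p^2*s*r*q^2-4*p^2*r^2*t+9*p^2*t*q^3-266*s*q*p^2*t+16*p*s^3+146*p*t*r*q^2-18*s*p*r^2*q
    +290*s*p*t*r-275*p*q*t^2+12*p*s^2*q^2+4*s*q^3*r-195*r^2*q*t+260*s*q^2*t+27*s*r^3
    +375*t^2*r-36*q^4*t-48*r*s^2*q-400*t*s^2"

end

theory Submission
  imports Defs "HOL-Computational_Algebra.Fundamental_Theorem_Algebra"
begin

text \<open>Since D = 0, f has a complex double root z, so f = (x - z)^2 g with g = x^3 + u x^2 + v x + w.
  Substituting the coefficients of this product, L1 becomes 2 g(z)^2 disc(g) and C0 becomes z L1;
  hence z = C0/L1 = d is real, g is real, and L1 < 0 forces g(d) \<noteq> 0 and disc(g) < 0.
  A real cubic with negative discriminant is (x - e)(x^2 + a x + b) with a positive quadratic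
  factor, so the sign of F2 = g(d) is the sign of d - e.\<close>

text \<open>L1 and C0 are defined over the reals only; these ring-generic copies let them be evaluated
  at the complex coefficients of the factorisation.\<close>

definition L1_ring :: "'a::comm_ring_1 \<Rightarrow> 'a \<Rightarrow> 'a \<Rightarrow> 'a \<Rightarrow> 'a \<Rightarrow> 'a" where
  "L1_ring p q r s t = -264*p*s^2*r-12*p^3*t*q^2+36*r^3*p*q-124*s*r*p*q^2+28*s*r*p^3*q+260*s*p*t*q
    -132*p^2*q*r*t+240*p*r^2*t+234*s*q*r^2+32*p^4*t*r+48*p*t*q^3-56*s*p^3*t-80*q^2*r*t
    +194*q*s^2*p^2-600*s*t*r-6*q^3*s*p^2+2*p^2*q^2*r^2-12*s*r^2*p^2-54*r^4+320*s^3
    -8*q^3*r^2-8*r^3*p^3+250*q*t^2-176*q^2*s^2+24*q^4*s-36*p^4*s^2-100*p^2*t^2"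

definition C0_ring :: "'a::comm_ring_1 \<Rightarrow> 'a \<Rightarrow> 'a \<Rightarrow> 'a \<Rightarrow> 'a \<Rightarrow> 'a" where
  "C0_ring p q r s t = 48*s*p^4*t+4*s*p^3*r^2+80*p^3*t^2-32*p^3*r*q*t-3*p^3*s^2*q+7*s^2*p^2*r
    -p^2*s*r*q^2-4*p^2*r^2*t+9*p^2*t*q^3-266*s*q*p^2*t+16*p*s^3+146*p*t*r*q^2-18*s*p*r^2*q
    +290*s*p*t*r-275*p*q*t^2+12*p*s^2*q^2+4*s*q^3*r-195*r^2*q*t+260*s*q^2*t+27*s*r^3
    +375*t^2*r-36*q^4*t-48*r*s^2*q-400*t*s^2"

definition cubic_disc :: "'a::comm_ring_1 \<Rightarrow> 'a \<Rightarrow> 'a \<Rightarrow> 'a" where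
  "cubic_disc u v w = u^2*v^2 - 4*v^3 - 4*u^3*w - 27*w^2 + 18*u*v*w"

lemma L1_eq_L1_ring: "L1 = L1_ring"
  by (intro ext) (simp add: L1_def L1_ring_def)

lemma C0_eq_C0_ring: "C0 = C0_ring"
  by (intro ext) (simp add: C0_def C0_ring_def)

lemma of_real_L1_ring:
  "of_real (L1_ring p q r s t) =
     (L1_ring (of_real p) (of_real q) (of_real r) (of_real s) (of_real t) :: 'a::{real_algebra_1,comm_ring_1})"
  by (simp add: L1_ring_def)

lemma of_real_C0_ring:
  "of_real (C0_ring p q r s t) =
     (C0_ring (of_real p) (of_real q) (of_real r) (of_real s) (of_real t) :: 'a::{real_algebra_1,comm_ring_1})"
  by (simp add: C0_ring_def)

text \<open>The five arguments are the coefficients of (x - z)^2 (x^3 + u x^2 + v x + w).\<close>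

lemma L1_ring_double_root:
  fixes z u v w :: "'a::field_char_0"
  shows "L1_ring (u - 2*z) (v - 2*z*u + z^2) (w - 2*z*v + z^2*u) (-2*z*w + z^2*v) (z^2*w) =
           2 * (z^3 + u*z^2 + v*z + w)^2 * cubic_disc u v w"
  unfolding L1_ring_def cubic_disc_def by algebra

lemma C0_ring_double_root:
  fixes z u v w :: "'a::field_char_0"
  shows "C0_ring (u - 2*z) (v - 2*z*u + z^2) (w - 2*z*v + z^2*u) (-2*z*w + z^2*v) (z^2*w) =
           z * L1_ring (u - 2*z) (v - 2*z*u + z^2) (w - 2*z*v + z^2*u) (-2*z*w + z^2*v) (z^2*w)"
  unfolding L1_ring_def C0_ring_def by algebra

lemma monic_quintic_double_root_eqs:
  fixes z p q r s t :: "'a::idom"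
  assumes "[:t, s, r, q, p, 1:] = [:-z, 1:]^2 * h"
  shows "z^5 + p*z^4 + q*z^3 + r*z^2 + s*z + t = 0"
    and "5*z^4 + 4*p*z^3 + 3*q*z^2 + 2*r*z + s = 0"
proof -
  have "poly [:t, s, r, q, p, 1:] z = 0"
    by (simp add: assms)
  then show "z^5 + p*z^4 + q*z^3 + r*z^2 + s*z + t = 0"
    by (simp add: algebra_simps eval_nat_numeral)
  have "poly (pderiv ([:-z, 1:] * [:-z, 1:] * h)) z = 0"
    unfolding pderiv_mult poly_add poly_mult by simp
  then have "poly (pderiv [:t, s, r, q, p, 1:]) z = 0"
    by (simp add: assms power2_eq_square)
  then show "5*z^4 + 4*p*z^3 + 3*q*z^2 + 2*r*z + s = 0"
    by (simp add: pderiv_pCons algebra_simps eval_nat_numeral)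
qed

lemma monic_quintic_double_root_coeffs:
  fixes z p q r s t :: "'a::idom"
  assumes "z^5 + p*z^4 + q*z^3 + r*z^2 + s*z + t = 0"
    and "5*z^4 + 4*p*z^3 + 3*q*z^2 + 2*r*z + s = 0"
  obtains u v w where "p = u - 2*z" "q = v - 2*z*u + z^2" "r = w - 2*z*v + z^2*u"
    "s = -2*z*w + z^2*v" "t = z^2*w"
proof
  define u where "u = p + 2*z"
  define v where "v = q + 2*z*u - z^2"
  define w where "w = r + 2*z*v - z^2*u"
  show "p = u - 2*z" "q = v - 2*z*u + z^2" "r = w - 2*z*v + z^2*u"
    by (simp_all add: u_def v_def w_def)
  show "s = -2*z*w + z^2*v" using assms(2) unfolding u_def v_def w_def by algebra
  show "t = z^2*w" using assms unfolding u_def v_def w_def by algebra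
qed

lemma disc5_eq_0_double_root:
  assumes "disc5 f = 0" and "degree f = 5" and "lead_coeff f = 1"
  shows "\<exists>z h. map_poly complex_of_real f = [:-z, 1:]^2 * h"
proof -
  define F where "F = map_poly complex_of_real f"
  have deg: "degree F = 5"
    unfolding F_def using assms(2) by (subst degree_map_poly) simp_all
  have lc: "lead_coeff F = 1"
    unfolding F_def using assms(3) by (subst lead_coeff_map_poly_nz) simp_all
  obtain root where "smult (lead_coeff F) (\<Prod>i<degree F. [:-root i, 1:]) = F"
    using complex_poly_decompose' by blast
  then have ex: "\<exists>\<alpha> :: nat \<Rightarrow> complex. F = (\<Prod>i<5. [:- \<alpha> i, 1:])"
    using deg lc by (metis smult_1_left)
  define \<alpha> where "\<alpha> = (SOME \<alpha> :: nat \<Rightarrow> complex. F = (\<Prod>i<5. [:- \<alpha> i, 1:]))"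
  have F: "F = (\<Prod>i<5. [:- \<alpha> i, 1:])"
    unfolding \<alpha>_def by (rule someI_ex[OF ex])
  have "(\<Prod>i<5. \<Prod>j\<in>{i<..<5}. (\<alpha> i - \<alpha> j)^2) = 0"
    using assms(1) unfolding disc5_def F_def[symmetric] \<alpha>_def[symmetric] by (simp add: Let_def)
  then obtain i j where ij: "i < 5" "j \<in> {i<..<5}" "\<alpha> i = \<alpha> j"
    by (auto simp: prod_zero_iff)
  have "F = [:- \<alpha> i, 1:] * (\<Prod>k\<in>{..<5}-{i}. [:- \<alpha> k, 1:])"
    using F ij by (simp add: prod.remove)
  also have "(\<Prod>k\<in>{..<5}-{i}. [:- \<alpha> k, 1:]) = [:- \<alpha> j, 1:] * (\<Prod>k\<in>{..<5}-{i}-{j}. [:- \<alpha> k, 1:])"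
    using ij by (intro prod.remove) auto
  finally have "F = [:- \<alpha> i, 1:]^2 * (\<Prod>k\<in>{..<5}-{i}-{j}. [:- \<alpha> k, 1:])"
    using ij(3) by (metis power2_eq_square mult.assoc)
  then show ?thesis unfolding F_def by blast
qed

lemma cubic_disc_neg_sgn:
  fixes u v w e x :: real
  assumes root: "poly [:w, v, u, 1:] e = 0" and disc: "cubic_disc u v w < 0"
  shows "sgn (poly [:w, v, u, 1:] x) = sgn (x - e)"
proof -
  define a where "a = u + e"
  define b where "b = v + e*a"
  have u: "u = a - e" and v: "v = b - e*a" by (simp_all add: a_def b_def)
  have w: "w = -e*b"
    using root unfolding a_def b_def by (simp add: algebra_simps eval_nat_numeral)
  have "cubic_disc u v w = (a^2 - 4*b) * (e^2 + a*e + b)^2"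
    unfolding cubic_disc_def u v w by algebra
  with disc have "a^2 - 4*b < 0"
    by (metis mult_nonneg_nonneg not_le zero_le_power2)
  then have "0 < (2*x + a)^2 + (4*b - a^2)"
    by (smt (verit) zero_le_power2)
  also have "\<dots> = 4*(x^2 + a*x + b)" by algebra
  finally have "x^2 + a*x + b > 0" by simp
  moreover have "poly [:w, v, u, 1:] x = (x - e) * (x^2 + a*x + b)"
    unfolding u v w by (simp add: algebra_simps eval_nat_numeral)
  ultimately show ?thesis by (simp add: sgn_mult)
qed

lemma quintic_double_root_at_C0_div_L1:
  fixes p q r s t :: real
  assumes d: "d = C0 p q r s t / L1 p q r s t"
    and "disc5 (quintic p q r s t) = 0" and "L1 p q r s t \<noteq> 0"
  obtains u v w where "p = u - 2*d" "q = v - 2*d*u + d^2" "r = w - 2*d*v + d^2*u"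
    "s = -2*d*w + d^2*v" "t = d^2*w"
proof -
  have "degree (quintic p q r s t) = 5" "lead_coeff (quintic p q r s t) = 1"
    by (simp_all add: quintic_def)
  then obtain z :: complex and h
    where "[:of_real t, of_real s, of_real r, of_real q, of_real p, 1:] = [:-z, 1:]^2 * h"
    using disc5_eq_0_double_root[OF assms(2)] by (auto simp: quintic_def map_poly_pCons)
  note eqs = monic_quintic_double_root_eqs[OF this]
  obtain U V W where UVW: "of_real p = U - 2*z" "of_real q = V - 2*z*U + z^2"
    "of_real r = W - 2*z*V + z^2*U" "of_real s = -2*z*W + z^2*V" "of_real t = z^2*W"
    using monic_quintic_double_root_coeffs[OF eqs] .
  have "of_real (C0 p q r s t) = z * of_real (L1 p q r s t)"
    unfolding C0_eq_C0_ring L1_eq_L1_ring of_real_C0_ring of_real_L1_ring UVW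
    by (rule C0_ring_double_root)
  then have "z = of_real d"
    using assms(3) by (simp add: d field_simps)
  with eqs have "d^5 + p*d^4 + q*d^3 + r*d^2 + s*d + t = 0"
    "5*d^4 + 4*p*d^3 + 3*q*d^2 + 2*r*d + s = 0"
    unfolding of_real_eq_0_iff[symmetric, where 'a=complex] by simp_all
  then show ?thesis
    using that by (rule monic_quintic_double_root_coeffs)
qed

lemma quintic_double_root_sign:
  fixes d u v w :: real
  assumes coeffs: "p = u - 2*d" "q = v - 2*d*u + d^2" "r = w - 2*d*v + d^2*u"
    "s = -2*d*w + d^2*v" "t = d^2*w"
    and L1_neg: "L1 p q r s t < 0"
  shows "order d (quintic p q r s t) = 2"
    and "poly (quintic p q r s t) e = 0 \<Longrightarrow> e \<noteq> d \<Longrightarrow>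
           (r + 3*q*d + 6*p*d^2 + 10*d^3 > 0 \<longrightarrow> e < d) \<and>
           (r + 3*q*d + 6*p*d^2 + 10*d^3 < 0 \<longrightarrow> e > d)"
proof -
  define G where "G = [:w, v, u, 1:]"
  have G_at_d: "poly G d = d^3 + u*d^2 + v*d + w"
    by (simp add: G_def algebra_simps eval_nat_numeral)
  have "L1 p q r s t = 2 * (poly G d)^2 * cubic_disc u v w"
    unfolding L1_eq_L1_ring coeffs G_at_d by (rule L1_ring_double_root)
  with L1_neg have Gd: "poly G d \<noteq> 0" and disc: "cubic_disc u v w < 0"
    by (auto simp: mult_less_0_iff)
  have f: "quintic p q r s t = [:-d, 1:]^2 * G"
    unfolding quintic_def G_def coeffs by (simp add: power2_eq_square algebra_simps)
  have "G \<noteq> 0"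
    by (simp add: G_def)
  with Gd show "order d (quintic p q r s t) = 2"
    by (simp add: f order_mult order_power_n_n order_0I)
  assume "poly (quintic p q r s t) e = 0" "e \<noteq> d"
  then have "poly G e = 0"
    by (simp add: f)
  then have "sgn (poly G d) = sgn (d - e)"
    using disc unfolding G_def by (rule cubic_disc_neg_sgn)
  moreover have "r + 3*q*d + 6*p*d^2 + 10*d^3 = poly G d"
    unfolding G_at_d coeffs by algebra
  ultimately show "(r + 3*q*d + 6*p*d^2 + 10*d^3 > 0 \<longrightarrow> e < d) \<and>
           (r + 3*q*d + 6*p*d^2 + 10*d^3 < 0 \<longrightarrow> e > d)"
    by (metis sgn_greater sgn_less diff_gt_0_iff_gt diff_less_0_iff_less)
qed

theorem mainTheorem9:
  fixes p q r s t :: real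
  assumes "disc5 (quintic p q r s t) = 0"
    and "L1 p q r s t < 0"
  shows "let f = quintic p q r s t; d = C0 p q r s t / L1 p q r s t;
             F2 = r + 3*q*d + 6*p*d^2 + 10*d^3 in
           order d f = 2 \<and>
           (\<forall>e. poly f e = 0 \<and> e \<noteq> d \<longrightarrow>
              (F2 > 0 \<longrightarrow> e < d) \<and> (F2 < 0 \<longrightarrow> e > d))"
proof -
  define d where "d = C0 p q r s t / L1 p q r s t"
  have "L1 p q r s t \<noteq> 0"
    using assms(2) by simp
  then obtain u v w where "p = u - 2*d" "q = v - 2*d*u + d^2" "r = w - 2*d*v + d^2*u"
    "s = -2*d*w + d^2*v" "t = d^2*w"
    using quintic_double_root_at_C0_div_L1[OF d_def assms(1)] by blast
  note sign = quintic_double_root_sign[OF this assms(2)]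
  show ?thesis
    unfolding Let_def d_def[symmetric] using sign by blast
qed

end
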